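(* For every $a\in(-\infty,1)$, the map $R_a:\mathbb D_a\to\mathbb D_a$ is continuous with respect to the norm $\|\rho\,\cdot\|_{L^\infty}$.
   Context: Let $\rho(x)=(1+|x|)^{-1/2}$ and $\eta_a=\frac{1}{2^{9/2}(4+|a|)^3}$. $\mathbb D_a$ is the set of continuous even functions $\omega$ on $\mathbb R$ with $\|\rho\omega\|_{L^\infty}<\infty$ such that $\omega(0)=1$; $(1-x^2)_+\le\omega(x)\le1$ for all $x$; $\omega$ is non-increasing on $[0,\infty)$; $s\mapsto\omega(\sqrt s)$ is convex on $[0,\infty)$; and the left derivative satisfies $\omega'_-(1/2)\le-\eta_a$. $T(\omega)(x)=\frac1\pi\int_0^\infty\ln\left|\frac{x^2-y^2}{y^2}\right|\omega(y)\,dy$, $r(\omega)=\frac1\pi\int_0^\infty\frac{\omega(0)-\omega(y)}{y^2}\,dy$. For $a\ne0$, $R_a(\omega)(x)=\big(1-\frac{aT(\omega)(x)}{r(\omega)}\big)_+^{1/a}$; for $a=0$, $R_0(\omega)(x)=\exp\big(-\frac{T(\omega)(x)}{r(\omega)}\big)$. That $R_a$ maps $\mathbb D_a$ into itself is a separate result. *)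

theory Defs
  imports "HOL-Analysis.Analysis"
begin

definition rho :: "real \<Rightarrow> real" where
  "rho x = 1 / sqrt (1 + \<bar>x\<bar>)"

definition eta :: "real \<Rightarrow> real" where
  "eta a = 1 / (2 powr (9/2) * (4 + \<bar>a\<bar>) ^ 3)"

text \<open>Weighted sup norm  || rho f ||_{L^infty} (f continuous, so ess sup = sup).\<close>
definition wnorm :: "(real \<Rightarrow> real) \<Rightarrow> real" where
  "wnorm f = (SUP x. \<bar>rho x * f x\<bar>)"

definition Da :: "real \<Rightarrow> (real \<Rightarrow> real) set" where
  "Da a = {\<omega>. continuous_on UNIV \<omega>
            \<and> (\<forall>x. \<omega> (-x) = \<omega> x)
            \<and> bounded (range (\<lambda>x. rho x * \<omega> x))
            \<and> \<omega> 0 = 1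
            \<and> (\<forall>x. max 0 (1 - x\<^sup>2) \<le> \<omega> x \<and> \<omega> x \<le> 1)
            \<and> antimono_on {0..} \<omega>
            \<and> convex_on {0..} (\<lambda>s. \<omega> (sqrt s))
            \<and> (\<exists>d. ((\<lambda>t. (\<omega> t - \<omega> (1/2)) / (t - 1/2)) \<longlongrightarrow> d) (at_left (1/2))
                   \<and> d \<le> - eta a)}"

definition Top :: "(real \<Rightarrow> real) \<Rightarrow> real \<Rightarrow> real" where
  "Top \<omega> x = (1/pi) * (LINT y:{0<..}|lborel. ln \<bar>(x\<^sup>2 - y\<^sup>2) / y\<^sup>2\<bar> * \<omega> y)"

definition rfun :: "(real \<Rightarrow> real) \<Rightarrow> real" where
  "rfun \<omega> = (1/pi) * (LINT y:{0<..}|lborel. (\<omega> 0 - \<omega> y) / y\<^sup>2)"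

definition Ra :: "real \<Rightarrow> (real \<Rightarrow> real) \<Rightarrow> real \<Rightarrow> real" where
  "Ra a \<omega> x = (if a = 0 then exp (- Top \<omega> x / rfun \<omega>)
                else (max 0 (1 - a * Top \<omega> x / rfun \<omega>)) powr (1/a))"

end

theory Submission
  imports Defs "HOL-Real_Asymp.Real_Asymp" "HOL-Probability.Sinc_Integral"
begin

(* R_a omega = g_a (T omega / r omega) with g_a t = (1 - a t)_+ ^ (1/a) (and exp (-t) for a = 0); for
   a < 1 the function g_a is 1-Lipschitz on [0, oo) with values in [0, 1].  The kernel
   k x y = ln |(x^2 - y^2) / y^2| satisfies k x (|x| t) = k 1 t, and k 1 is integrable on (0, oo)
   with integral 0.  Hence T omega >= 0 (omega is nonincreasing and k x changes sign once),
   T omega x = O(|x|), and by dominated convergence T omega and r omega depend continuously on omega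
   in the weighted norm, uniformly for |x| <= M; the slope condition at 1/2 gives r omega > 0.  So
   R_a omega' is uniformly close to R_a omega on [-M, M], while for |x| > M the weight rho x is
   small and |R_a omega' x - R_a omega x| <= 1. *)

lemma has_real_derivative_ln_abs:
  fixes x :: real
  assumes "x \<noteq> 0"
  shows "((\<lambda>x. ln \<bar>x\<bar>) has_real_derivative inverse x) (at x)"
proof (cases "x > 0")
  case True
  show ?thesis
    by (rule has_field_derivative_transform_within_open[OF DERIV_ln[OF True], of "{0<..}"])
       (use True in auto)
next
  case False
  with assms have "x < 0" by simp
  have "((\<lambda>x. ln (- x)) has_real_derivative inverse x) (at x)"
    using \<open>x < 0\<close> by (auto intro!: derivative_eq_intros simp: field_simps)
  then show ?thesis
    by (rule has_field_derivative_transform_within_open[of _ _ _ "{..<0}"]) (use \<open>x < 0\<close> in auto)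
qed

lemma has_real_derivative_ln_abs_compose [derivative_intros]:
  fixes f :: "real \<Rightarrow> real"
  assumes "(f has_real_derivative f') (at x within S)" "f x \<noteq> 0"
  shows "((\<lambda>x. ln \<bar>f x\<bar>) has_real_derivative f' / f x) (at x within S)"
  using DERIV_chain2[OF has_real_derivative_ln_abs[OF assms(2)] assms(1)]
  by (simp add: field_simps)

lemma abs_diff_le_of_deriv_bound:
  fixes f f' :: "real \<Rightarrow> real"
  assumes "s \<le> t" "continuous_on {s..t} f"
    and "\<And>x. s < x \<Longrightarrow> x < t \<Longrightarrow> (f has_real_derivative f' x) (at x)"
    and "\<And>x. s < x \<Longrightarrow> x < t \<Longrightarrow> \<bar>f' x\<bar> \<le> C"
  shows "\<bar>f t - f s\<bar> \<le> C * (t - s)"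
proof (cases "s = t")
  case False
  with assms(1) have "s < t"
    by simp
  then obtain l z where z: "s < z" "z < t" "(f has_real_derivative l) (at z)" "f t - f s = (t - s) * l"
    using MVT[OF _ assms(2)] assms(3) real_differentiable_def by meson
  have "l = f' z"
    using DERIV_unique[OF z(3) assms(3)[OF z(1,2)]] .
  then show ?thesis
    using z(4) assms(4)[OF z(1,2)] \<open>s < t\<close> by (simp add: abs_mult mult.commute mult_right_mono)
qed simp

lemma powr_le_one_of_ge_one:
  fixes x p :: real
  assumes "1 \<le> x" "p \<le> 0"
  shows "x powr p \<le> 1"
  using powr_mono[OF assms(2,1)] assms(1) by simp

lemma interval_integral_FTC_nonpos:
  fixes f F :: "real \<Rightarrow> real" and a b :: ereal
  assumes "a < b"
    and "\<And>x. a < ereal x \<Longrightarrow> ereal x < b \<Longrightarrow> DERIV F x :> f x"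
    and "\<And>x. a < ereal x \<Longrightarrow> ereal x < b \<Longrightarrow> isCont f x"
    and "\<And>x. a < ereal x \<Longrightarrow> ereal x < b \<Longrightarrow> f x \<le> 0"
    and "((F \<circ> real_of_ereal) \<longlongrightarrow> A) (at_right a)"
    and "((F \<circ> real_of_ereal) \<longlongrightarrow> B) (at_left b)"
  shows "set_integrable lborel (einterval a b) f" "(LBINT x=a..b. f x) = B - A"
proof -
  have F': "DERIV (\<lambda>x. - F x) x :> - f x" if "a < ereal x" "ereal x < b" for x
    using assms(2)[OF that] by (rule derivative_intros)
  have A: "(((\<lambda>x. - F x) \<circ> real_of_ereal) \<longlongrightarrow> - A) (at_right a)"
    and B: "(((\<lambda>x. - F x) \<circ> real_of_ereal) \<longlongrightarrow> - B) (at_left b)"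
    using tendsto_minus[OF assms(5)] tendsto_minus[OF assms(6)] by (simp_all add: o_def)
  note neg = interval_integral_FTC_nonneg[OF assms(1) F' _ _ A B]
  have "set_integrable lborel (einterval a b) (\<lambda>x. - f x)"
    by (rule neg(1)) (use assms(3,4) in \<open>auto intro!: continuous_intros\<close>)
  moreover have "(LBINT x=a..b. - f x) = - B - - A"
    by (rule neg(2)) (use assms(3,4) in \<open>auto intro!: continuous_intros\<close>)
  ultimately show "set_integrable lborel (einterval a b) f" "(LBINT x=a..b. f x) = B - A"
    using set_integrable_mult_right[of "-1" lborel _ "\<lambda>x. - f x"]
    by (simp_all add: interval_lebesgue_integral_uminus)
qed

lemma interval_integral_join:
  fixes f :: "real \<Rightarrow> real" and a c :: ereal and b :: real
  assumes "a < ereal b" "ereal b < c"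
    and "set_integrable lborel (einterval a b) f" "set_integrable lborel (einterval b c) f"
  shows "set_integrable lborel (einterval a c) f"
    "(LBINT x=a..c. f x) = (LBINT x=a..b. f x) + (LBINT x=b..c. f x)"
proof -
  have disj: "einterval a b \<inter> einterval b c = {}"
    by (auto simp: einterval_def)
  have diff: "(einterval a c - (einterval a b \<union> einterval b c))
      \<union> ((einterval a b \<union> einterval b c) - einterval a c) \<subseteq> {b}"
    using assms(1,2) by (auto simp: einterval_def) (metis less_ereal.simps(1) order.strict_trans)+
  have int: "set_integrable lborel (einterval a b \<union> einterval b c) f"
    using assms(3,4) by (rule set_integrable_Un) auto
  show "set_integrable lborel (einterval a c) f"
    using set_integrable_discrete_difference[of "{b}" _ _ lborel f, OF _ diff] int by simp
  have "(LBINT x=a..c. f x) = (LINT x:einterval a b \<union> einterval b c|lborel. f x)"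
    using assms(1,2) less_imp_le[OF order.strict_trans[OF assms(1,2)]]
      set_integral_discrete_difference[of "{b}" _ _ lborel f, OF _ diff]
    by (simp add: interval_lebesgue_integral_def)
  also have "\<dots> = (LBINT x=a..b. f x) + (LBINT x=b..c. f x)"
    using assms set_integral_Un[OF disj assms(3,4)] less_imp_le[OF assms(1)] less_imp_le[OF assms(2)]
    by (simp add: interval_lebesgue_integral_def)
  finally show "(LBINT x=a..c. f x) = (LBINT x=a..b. f x) + (LBINT x=b..c. f x)" .
qed

lemma
  fixes h :: "real \<Rightarrow> real" and c :: real
  assumes "0 < c"
  shows set_integrable_Ioi_rescale_iff:
      "set_integrable lborel {0<..} (\<lambda>t. h (c * t)) \<longleftrightarrow> set_integrable lborel {0<..} h"
    and set_integral_Ioi_rescale: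
      "(LINT y:{0<..}|lborel. h y) = c * (LINT t:{0<..}|lborel. h (c * t))"
proof -
  have ind: "indicator {0<..} (c * t) = (indicator {0<..} t :: real)" for t
    using assms by (auto simp: indicator_def zero_less_mult_iff)
  show "set_integrable lborel {0<..} (\<lambda>t. h (c * t)) \<longleftrightarrow> set_integrable lborel {0<..} h"
    using lborel_integrable_real_affine_iff[of c "\<lambda>y. indicator {0<..} y *\<^sub>R h y" 0] assms
    by (simp add: set_integrable_def ind)
  show "(LINT y:{0<..}|lborel. h y) = c * (LINT t:{0<..}|lborel. h (c * t))"
    using lborel_integral_real_affine[of c "\<lambda>y. indicator {0<..} y *\<^sub>R h y" 0] assms
    by (simp add: set_lebesgue_integral_def ind)
qed

lemma tendsto_set_integral_min_at_right_0:
  fixes w h :: "'a \<Rightarrow> real"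
  assumes "set_integrable M A w" "A \<in> sets M" "w \<in> borel_measurable M" "h \<in> borel_measurable M"
    and "\<And>x. x \<in> A \<Longrightarrow> 0 \<le> w x" "\<And>x. x \<in> A \<Longrightarrow> 0 \<le> h x"
  shows "((\<lambda>\<delta>. LINT x:A|M. min (w x) (\<delta> * h x)) \<longlongrightarrow> 0) (at_right 0)"
proof -
  note [measurable] = assms(2-4)
  let ?s = "\<lambda>t x. indicator A x *\<^sub>R min (w x) (inverse t * h x)"
  have "((\<lambda>t. integral\<^sup>L M (?s t)) \<longlongrightarrow> integral\<^sup>L M (\<lambda>x. 0)) at_top"
  proof (rule integral_dominated_convergence_at_top[where w = "\<lambda>x. indicator A x *\<^sub>R w x"])
    show "integrable M (\<lambda>x. indicator A x *\<^sub>R w x)"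
      using assms(1) by (simp add: set_integrable_def)
    show "AE x in M. ((\<lambda>t. ?s t x) \<longlongrightarrow> 0) at_top"
    proof (rule AE_I2)
      fix x
      have "((\<lambda>t::real. inverse t) \<longlongrightarrow> 0) at_top"
        by (intro tendsto_inverse_0_at_top filterlim_ident)
      then have "((\<lambda>t. min (w x) (inverse t * h x)) \<longlongrightarrow> min (w x) (0 * h x)) at_top"
        by (intro tendsto_min tendsto_const tendsto_mult)
      then show "((\<lambda>t. ?s t x) \<longlongrightarrow> 0) at_top"
        using assms(5)[of x] by (cases "x \<in> A") (simp_all add: min_absorb2)
    qed
    show "?s t \<in> borel_measurable M" for t
      by measurable
    show "\<forall>\<^sub>F t in at_top. AE x in M. norm (?s t x) \<le> indicator A x *\<^sub>R w x"
      using eventually_gt_at_top[of 0]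
      by eventually_elim (use assms(5,6) in \<open>auto intro!: AE_I2 simp: indicator_def\<close>)
  qed simp
  then have "((\<lambda>t. LINT x:A|M. min (w x) (inverse t * h x)) \<longlongrightarrow> 0) at_top"
    by (simp add: set_lebesgue_integral_def)
  then show ?thesis
    by (simp add: filterlim_at_right_to_top)
qed

lemma set_integrable_min_scaled:
  fixes w h :: "'a \<Rightarrow> real"
  assumes "set_integrable M A w" "A \<in> sets M" "w \<in> borel_measurable M" "h \<in> borel_measurable M"
    and "\<And>x. x \<in> A \<Longrightarrow> 0 \<le> w x" "\<And>x. x \<in> A \<Longrightarrow> 0 \<le> \<delta> * h x"
  shows "set_integrable M A (\<lambda>x. min (w x) (\<delta> * h x))"
proof (rule set_integrable_bound[OF assms(1)])
  show "set_borel_measurable M A (\<lambda>x. min (w x) (\<delta> * h x))"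
    using assms(2-4) unfolding set_borel_measurable_def by measurable
  show "AE x in M. x \<in> A \<longrightarrow> norm (min (w x) (\<delta> * h x)) \<le> norm (w x)"
    using assms(5,6) by (intro AE_I2) auto
qed

lemma set_integrable_two_div_1_plus_square: "set_integrable lborel {0<..} (\<lambda>y::real. 2 / (1 + y\<^sup>2))"
proof -
  have "set_integrable lborel UNIV (\<lambda>y::real. inverse (1 + y\<^sup>2))"
    using integrable_inverse_1_plus_square by simp
  then have "set_integrable lborel {0<..} (\<lambda>y::real. inverse (1 + y\<^sup>2))"
    by (rule set_integrable_subset) auto
  then have "set_integrable lborel {0<..} (\<lambda>y::real. 2 * inverse (1 + y\<^sup>2))"
    by (rule set_integrable_mult_right)
  then show ?thesis
    by (simp add: inverse_eq_divide)
qed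

lemma div_square_le_two_div_1_plus_square:
  fixes d y :: real
  assumes "0 \<le> d" "d \<le> 1" "d \<le> y\<^sup>2" "y \<noteq> 0"
  shows "d / y\<^sup>2 \<le> 2 / (1 + y\<^sup>2)"
proof -
  have "d * y\<^sup>2 \<le> y\<^sup>2"
    using mult_right_mono[OF assms(2), of "y\<^sup>2"] by simp
  then have "d * (1 + y\<^sup>2) \<le> 2 * y\<^sup>2"
    using assms(3) by (simp add: algebra_simps)
  then show ?thesis
    using assms by (simp add: divide_simps add_pos_nonneg)
qed

lemma set_integrable_div_square:
  fixes g :: "real \<Rightarrow> real"
  assumes "g \<in> borel_measurable borel" "\<And>y. \<bar>g y\<bar> \<le> 1" "\<And>y. \<bar>g y\<bar> \<le> y\<^sup>2"
  shows "set_integrable lborel {0<..} (\<lambda>y. g y / y\<^sup>2)"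
proof (rule set_integrable_bound[OF set_integrable_two_div_1_plus_square])
  show "set_borel_measurable lborel {0<..} (\<lambda>y. g y / y\<^sup>2)"
    using assms(1) unfolding set_borel_measurable_def by measurable
  show "AE y in lborel. y \<in> {0<..} \<longrightarrow> norm (g y / y\<^sup>2) \<le> norm (2 / (1 + y\<^sup>2))"
    using assms(2,3) by (intro AE_I2) (auto simp: abs_divide intro!: div_square_le_two_div_1_plus_square)
qed

lemma abs_divide_diff_le:
  fixes T T' r r' B e :: real
  assumes "0 < r" "0 \<le> T" "T \<le> B" "\<bar>T' - T\<bar> \<le> e * r / 4"
    and "\<bar>r' - r\<bar> \<le> min (r / 2) (e * r\<^sup>2 / (4 * (B + 1)))"
  shows "\<bar>T' / r' - T / r\<bar> \<le> e"
proof -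
  have "\<bar>r' - r\<bar> \<le> r / 2"
    using assms(5) by simp
  then have "r / 2 \<le> r'" "0 < r'"
    using assms(1) abs_ge_minus_self[of "r' - r"] by linarith+
  have "0 \<le> e * r"
    using assms(4) abs_ge_zero[of "T' - T"] by linarith
  then have "0 \<le> e" "0 \<le> B"
    using assms(1-3) by (auto simp: zero_le_mult_iff)
  have "T' / r' - T / r = (T' - T) / r' + T * (r - r') / (r * r')"
    using \<open>0 < r\<close> \<open>0 < r'\<close> by (simp add: field_simps)
  moreover have "\<bar>(T' - T) / r'\<bar> \<le> (e * r / 4) / (r / 2)"
    unfolding abs_divide using assms(1,4) \<open>r / 2 \<le> r'\<close> \<open>0 < r'\<close> \<open>0 \<le> e * r\<close>
    by (intro frac_le) auto
  moreover have "\<bar>T * (r - r') / (r * r')\<bar> \<le> (B * (e * r\<^sup>2 / (4 * (B + 1)))) / (r * (r / 2))"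
    unfolding abs_divide abs_mult using assms \<open>r / 2 \<le> r'\<close> \<open>0 < r'\<close> \<open>0 \<le> e\<close>
    by (intro frac_le mult_mono mult_left_mono) (auto simp: abs_minus_commute)
  moreover have "(B * (e * r\<^sup>2 / (4 * (B + 1)))) / (r * (r / 2)) = e / 2 * (B / (B + 1))"
    using \<open>0 < r\<close> \<open>0 \<le> B\<close> by (simp add: field_simps power2_eq_square add_nonneg_eq_0_iff)
  moreover have "e / 2 * (B / (B + 1)) \<le> e / 2"
    using \<open>0 \<le> B\<close> \<open>0 \<le> e\<close> by (intro mult_left_le) auto
  moreover have "(e * r / 4) / (r / 2) = e / 2"
    using \<open>0 < r\<close> by simp
  ultimately show ?thesis
    by linarith
qed

section \<open>The logarithmic kernel\<close>

definition log_kernel :: "real \<Rightarrow> real \<Rightarrow> real" where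
  "log_kernel x y = ln \<bar>(x\<^sup>2 - y\<^sup>2) / y\<^sup>2\<bar>"

lemma borel_measurable_log_kernel [measurable]: "log_kernel x \<in> borel_measurable borel"
  unfolding log_kernel_def by measurable

lemma log_kernel_zero_left [simp]: "log_kernel 0 = (\<lambda>y. 0)"
  by (rule ext) (simp add: log_kernel_def)

lemma log_kernel_nonneg:
  assumes "y \<noteq> 0" "2 * y\<^sup>2 \<le> x\<^sup>2"
  shows "0 \<le> log_kernel x y"
proof -
  have "1 \<le> (x\<^sup>2 - y\<^sup>2) / y\<^sup>2"
    using assms by (simp add: le_divide_eq)
  then have "1 \<le> \<bar>(x\<^sup>2 - y\<^sup>2) / y\<^sup>2\<bar>"
    by linarith
  then show ?thesis
    unfolding log_kernel_def by (rule ln_ge_zero)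
qed

lemma log_kernel_nonpos:
  assumes "y \<noteq> 0" "x\<^sup>2 \<le> 2 * y\<^sup>2"
  shows "log_kernel x y \<le> 0"
proof -
  define u where "u = \<bar>(x\<^sup>2 - y\<^sup>2) / y\<^sup>2\<bar>"
  have "0 \<le> u" "u \<le> 1"
    using assms by (simp_all add: u_def abs_le_iff divide_le_eq le_divide_eq)
  then show ?thesis
    unfolding log_kernel_def u_def[symmetric] by (cases "u = 0") (simp_all add: ln_le_zero_iff)
qed

lemma log_kernel_scale:
  assumes "x \<noteq> 0" "t \<noteq> 0"
  shows "log_kernel x (\<bar>x\<bar> * t) = log_kernel 1 t"
proof -
  have "(x\<^sup>2 - (\<bar>x\<bar> * t)\<^sup>2) / (\<bar>x\<bar> * t)\<^sup>2 = (1 - t\<^sup>2) / t\<^sup>2"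
    using assms by (simp add: power_mult_distrib field_simps)
  then show ?thesis
    by (simp add: log_kernel_def)
qed

lemma log_kernel_one_sign:
  assumes "0 < t"
  shows "t \<le> 1 / sqrt 2 \<Longrightarrow> 0 \<le> log_kernel 1 t"
    and "1 / sqrt 2 \<le> t \<Longrightarrow> log_kernel 1 t \<le> 0"
proof -
  assume "t \<le> 1 / sqrt 2"
  then have "t\<^sup>2 \<le> (1 / sqrt 2)\<^sup>2"
    using assms by (intro power_mono) auto
  then show "0 \<le> log_kernel 1 t"
    using assms by (intro log_kernel_nonneg) (auto simp: power_divide)
next
  assume "1 / sqrt 2 \<le> t"
  then have "(1 / sqrt 2)\<^sup>2 \<le> t\<^sup>2"
    by (intro power_mono) auto
  then show "log_kernel 1 t \<le> 0"
    using assms by (intro log_kernel_nonpos) (auto simp: power_divide)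
qed

(* With the absolute values, one primitive serves on both sides of the singularity at t = 1. *)
definition log_kernel_primitive :: "real \<Rightarrow> real" where
  "log_kernel_primitive t = t * log_kernel 1 t + ln \<bar>(1 + t) / (1 - t)\<bar>"

lemma has_real_derivative_log_kernel_primitive:
  assumes "0 < t" "t \<noteq> 1"
  shows "(log_kernel_primitive has_real_derivative log_kernel 1 t) (at t)"
proof -
  have nz: "1 - t\<^sup>2 \<noteq> 0" "1 - t \<noteq> 0" "1 + t \<noteq> 0"
    using assms by (auto simp: power2_eq_1_iff)
  have d1: "((\<lambda>t. (1 - t\<^sup>2) / t\<^sup>2) has_real_derivative - 2 / t ^ 3) (at t)"
    using assms by (auto intro!: derivative_eq_intros simp: field_simps power2_eq_square power3_eq_cube)
  have d2: "((\<lambda>t. (1 + t) / (1 - t)) has_real_derivative 2 / (1 - t)\<^sup>2) (at t)"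
    using nz by (auto intro!: derivative_eq_intros simp: field_simps power2_eq_square)
  show ?thesis
    unfolding log_kernel_primitive_def[abs_def] log_kernel_def power_one
  proof (rule DERIV_cong[OF DERIV_add[OF DERIV_mult[OF DERIV_ident
        has_real_derivative_ln_abs_compose[OF d1]] has_real_derivative_ln_abs_compose[OF d2]]])
    show "1 * ln \<bar>(1 - t\<^sup>2) / t\<^sup>2\<bar> + - 2 / t ^ 3 / ((1 - t\<^sup>2) / t\<^sup>2) * t
        + 2 / (1 - t)\<^sup>2 / ((1 + t) / (1 - t)) = ln \<bar>(1 - t\<^sup>2) / t\<^sup>2\<bar>"
    proof -
      have "- 2 / t ^ 3 / ((1 - t\<^sup>2) / t\<^sup>2) * t = - 2 / ((1 - t) * (1 + t))"
        using assms nz by (simp add: field_simps power2_eq_square power3_eq_cube)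
      moreover have "2 / (1 - t)\<^sup>2 / ((1 + t) / (1 - t)) = 2 / ((1 - t) * (1 + t))"
        using nz by (simp add: power2_eq_square divide_simps del: eq_divide_eq_1)
      ultimately show ?thesis
        by simp
    qed
  qed (use assms nz in auto)
qed

lemma log_kernel_primitive_limits:
  shows "(log_kernel_primitive \<longlongrightarrow> 0) (at_right 0)"
    and "(log_kernel_primitive \<longlongrightarrow> 2 * ln 2) (at_left 1)"
    and "(log_kernel_primitive \<longlongrightarrow> 2 * ln 2) (at_right 1)"
    and "(log_kernel_primitive \<longlongrightarrow> 0) at_top"
  unfolding log_kernel_primitive_def[abs_def] log_kernel_def by real_asymp+

(* The FTC lemmas need an integrand of constant sign, so the half-line is split at 1/sqrt 2,
   where log_kernel 1 changes sign, and at the singularity 1. *)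
lemma
  shows set_integrable_log_kernel_one: "set_integrable lborel {0<..} (log_kernel 1)"
    and set_integral_log_kernel_one: "(LINT t:{0<..}|lborel. log_kernel 1 t) = 0"
proof -
  define c :: real where "c = 1 / sqrt 2"
  have "0 < c" "c < 1"
    by (auto simp: c_def)
  note deriv = has_real_derivative_log_kernel_primitive
  have small: "0 \<le> log_kernel 1 t" if "0 < t" "t < c" for t
    using log_kernel_one_sign(1)[OF that(1)] that(2) by (simp add: c_def)
  have large: "log_kernel 1 t \<le> 0" if "c < t" for t
    using log_kernel_one_sign(2)[of t] that \<open>0 < c\<close> by (simp add: c_def)
  have cont: "isCont (log_kernel 1) t" if "0 < t" "t \<noteq> 1" for t
    using that unfolding log_kernel_def by (auto intro!: continuous_intros simp: power2_eq_1_iff)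
  have "(log_kernel_primitive \<longlongrightarrow> log_kernel_primitive c) (at c)"
    using DERIV_isCont[OF deriv] \<open>0 < c\<close> \<open>c < 1\<close> by (simp add: isCont_def)
  with log_kernel_primitive_limits
  have lim: "((log_kernel_primitive \<circ> real_of_ereal) \<longlongrightarrow> 0) (at_right 0)"
    "((log_kernel_primitive \<circ> real_of_ereal) \<longlongrightarrow> log_kernel_primitive c) (at_left (ereal c))"
    "((log_kernel_primitive \<circ> real_of_ereal) \<longlongrightarrow> log_kernel_primitive c) (at_right (ereal c))"
    "((log_kernel_primitive \<circ> real_of_ereal) \<longlongrightarrow> 2 * ln 2) (at_left 1)"
    "((log_kernel_primitive \<circ> real_of_ereal) \<longlongrightarrow> 2 * ln 2) (at_right 1)"
    "((log_kernel_primitive \<circ> real_of_ereal) \<longlongrightarrow> 0) (at_left \<infinity>)"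
    unfolding ereal_tendsto_simps zero_ereal_def one_ereal_def by (auto simp: filterlim_at_split)
  have I1: "set_integrable lborel (einterval 0 c) (log_kernel 1)"
    "(LBINT t=0..c. log_kernel 1 t) = log_kernel_primitive c - 0"
    by (rule interval_integral_FTC_nonneg[of _ _ log_kernel_primitive];
        use \<open>0 < c\<close> \<open>c < 1\<close> in \<open>force intro: deriv cont lim small\<close>)+
  have I2: "set_integrable lborel (einterval c 1) (log_kernel 1)"
    "(LBINT t=c..1. log_kernel 1 t) = 2 * ln 2 - log_kernel_primitive c"
    by (rule interval_integral_FTC_nonpos[of _ _ log_kernel_primitive];
        use \<open>0 < c\<close> \<open>c < 1\<close> in \<open>force intro: deriv cont lim large\<close>)+
  have I3: "set_integrable lborel (einterval 1 \<infinity>) (log_kernel 1)"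
    "(LBINT t=1..\<infinity>. log_kernel 1 t) = 0 - 2 * ln 2"
    by (rule interval_integral_FTC_nonpos[of _ _ log_kernel_primitive];
        use \<open>0 < c\<close> \<open>c < 1\<close> in \<open>force intro: deriv cont lim large\<close>)+
  have I12: "set_integrable lborel (einterval 0 1) (log_kernel 1)"
    "(LBINT t=0..1. log_kernel 1 t) = 2 * ln 2"
    using interval_integral_join[of 0 c 1, OF _ _ I1(1) I2(1)] I1(2) I2(2) \<open>0 < c\<close> \<open>c < 1\<close>
    by simp_all
  have "einterval 0 \<infinity> = {0<..}"
    by (auto simp: einterval_def)
  then show "set_integrable lborel {0<..} (log_kernel 1)" "(LINT t:{0<..}|lborel. log_kernel 1 t) = 0"
    using interval_integral_join[of 0 1 \<infinity>, folded one_ereal_def, OF _ _ I12(1) I3(1)] I12(2) I3(2)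
    by (simp_all add: interval_lebesgue_integral_def)
qed

lemma
  fixes h :: "real \<Rightarrow> real"
  assumes "x \<noteq> 0"
  shows set_integrable_log_kernel_rescale_iff:
      "set_integrable lborel {0<..} (\<lambda>y. h (log_kernel x y))
        \<longleftrightarrow> set_integrable lborel {0<..} (\<lambda>t. h (log_kernel 1 t))"
    and set_integral_log_kernel_rescale:
      "(LINT y:{0<..}|lborel. h (log_kernel x y)) = \<bar>x\<bar> * (LINT t:{0<..}|lborel. h (log_kernel 1 t))"
proof -
  have "0 < \<bar>x\<bar>"
    using assms by simp
  have "set_integrable lborel {0<..} (\<lambda>t. h (log_kernel x (\<bar>x\<bar> * t)))
      \<longleftrightarrow> set_integrable lborel {0<..} (\<lambda>t. h (log_kernel 1 t))"
    using assms by (intro set_integrable_cong) (simp_all add: log_kernel_scale)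
  then show "set_integrable lborel {0<..} (\<lambda>y. h (log_kernel x y))
      \<longleftrightarrow> set_integrable lborel {0<..} (\<lambda>t. h (log_kernel 1 t))"
    using set_integrable_Ioi_rescale_iff[OF \<open>0 < \<bar>x\<bar>\<close>, of "\<lambda>y. h (log_kernel x y)"] by simp
  have "(LINT t:{0<..}|lborel. h (log_kernel x (\<bar>x\<bar> * t))) = (LINT t:{0<..}|lborel. h (log_kernel 1 t))"
    using assms by (intro set_lebesgue_integral_cong) (simp_all add: log_kernel_scale)
  then show "(LINT y:{0<..}|lborel. h (log_kernel x y)) = \<bar>x\<bar> * (LINT t:{0<..}|lborel. h (log_kernel 1 t))"
    using set_integral_Ioi_rescale[OF \<open>0 < \<bar>x\<bar>\<close>, of "\<lambda>y. h (log_kernel x y)"] by simp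
qed

lemma set_integrable_log_kernel: "set_integrable lborel {0<..} (log_kernel x)"
  using set_integrable_log_kernel_rescale_iff[of x "\<lambda>u. u"] set_integrable_log_kernel_one
  by (cases "x = 0") (simp_all add: set_integrable_def)

lemma set_integral_log_kernel: "(LINT y:{0<..}|lborel. log_kernel x y) = 0"
  using set_integral_log_kernel_rescale[of x "\<lambda>u. u"] set_integral_log_kernel_one
  by (cases "x = 0") simp_all

definition log_kernel_mass :: real where
  "log_kernel_mass = (LINT t:{0<..}|lborel. \<bar>log_kernel 1 t\<bar>)"

lemma log_kernel_mass_nonneg: "0 \<le> log_kernel_mass"
  unfolding log_kernel_mass_def set_lebesgue_integral_def by (intro integral_nonneg_AE) auto

lemma set_integral_abs_log_kernel:
  "(LINT y:{0<..}|lborel. \<bar>log_kernel x y\<bar>) = \<bar>x\<bar> * log_kernel_mass"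
  using set_integral_log_kernel_rescale[of x abs] by (cases "x = 0") (simp_all add: log_kernel_mass_def)

lemma set_integrable_log_kernel_mult:
  fixes g :: "real \<Rightarrow> real"
  assumes "g \<in> borel_measurable borel" "\<And>y. \<bar>g y\<bar> \<le> 1"
  shows "set_integrable lborel {0<..} (\<lambda>y. log_kernel x y * g y)"
proof (rule set_integrable_bound[OF set_integrable_log_kernel])
  show "set_borel_measurable lborel {0<..} (\<lambda>y. log_kernel x y * g y)"
    using assms(1) unfolding set_borel_measurable_def by measurable
  show "AE y in lborel. y \<in> {0<..} \<longrightarrow> norm (log_kernel x y * g y) \<le> norm (log_kernel x y)"
    using assms(2) by (intro AE_I2) (auto simp: abs_mult intro!: mult_left_le)
qed

section \<open>The profile function\<close>

definition profile :: "real \<Rightarrow> real \<Rightarrow> real" where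
  "profile a t = (if a = 0 then exp (- t) else (max 0 (1 - a * t)) powr (1 / a))"

lemma Ra_eq_profile: "Ra a \<omega> x = profile a (Top \<omega> x / rfun \<omega>)"
  by (simp add: Ra_def profile_def)

lemma profile_nonneg: "0 \<le> profile a t"
  by (simp add: profile_def)

lemma profile_le_one:
  assumes "0 \<le> t"
  shows "profile a t \<le> 1"
proof (cases "a < 0")
  case True
  have "1 \<le> 1 - a * t"
    using True assms by (simp add: mult_nonpos_nonneg)
  then show ?thesis
    using True by (simp add: profile_def powr_le_one_of_ge_one)
next
  case False
  then show ?thesis
    using assms by (auto simp: profile_def intro!: powr_le1)
qed

lemma profile_deriv_bound:
  fixes a x :: real
  assumes "a < 1" "a \<noteq> 0" "0 \<le> x" "0 < 1 - a * x"
  shows "(1 - a * x) powr (1 / a - 1) \<le> 1"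
proof (cases "a < 0")
  case True
  have "a * x \<le> 0"
    using mult_nonpos_nonneg[of a x] True assms(3) by linarith
  moreover have "1 / a < 0"
    using True by simp
  ultimately show ?thesis
    by (intro powr_le_one_of_ge_one) simp_all
next
  case False
  with assms have "0 < a"
    by simp
  then have "1 - a * x \<le> 1" "0 \<le> 1 / a - 1"
    using assms by (simp_all add: field_simps)
  then show ?thesis
    using assms(4) by (intro powr_le1) auto
qed

lemma power_profile_lipschitz_le:
  fixes a s t :: real
  assumes "a < 1" "a \<noteq> 0" "0 \<le> s" "s \<le> t" "0 < a \<Longrightarrow> t \<le> 1 / a"
  shows "\<bar>(1 - a * t) powr (1 / a) - (1 - a * s) powr (1 / a)\<bar> \<le> t - s"
proof -
  have base_nonneg: "0 \<le> 1 - a * x \<and> (1 - a * x = 0 \<longrightarrow> 0 < 1 / a)" if "s \<le> x" "x \<le> t" for x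
  proof (cases "0 < a")
    case True
    have "a * x \<le> a * t"
      using True that by (intro mult_left_mono) auto
    moreover have "a * t \<le> 1"
      using True assms(5) by (simp add: field_simps)
    ultimately have "0 \<le> 1 - a * x"
      by linarith
    then show ?thesis
      using True by simp
  qed (use assms that mult_nonpos_nonneg[of a x] in auto)
  have base_pos: "0 < 1 - a * x" if "s \<le> x" "x < t" for x
  proof (cases "0 < a")
    case True
    have "a * x < a * t"
      using True that by simp
    moreover have "a * t \<le> 1"
      using True assms(5) by (simp add: field_simps)
    ultimately show ?thesis
      by linarith
  qed (use assms that mult_nonpos_nonneg[of a x] in auto)
  have "\<bar>(1 - a * t) powr (1 / a) - (1 - a * s) powr (1 / a)\<bar> \<le> 1 * (t - s)"
  proof (rule abs_diff_le_of_deriv_bound[where f' = "\<lambda>x. - ((1 - a * x) powr (1 / a - 1))"])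
    show "continuous_on {s..t} (\<lambda>x. (1 - a * x) powr (1 / a))"
      using base_nonneg by (intro continuous_on_powr' continuous_intros) auto
    show "((\<lambda>x. (1 - a * x) powr (1 / a)) has_real_derivative - ((1 - a * x) powr (1 / a - 1))) (at x)"
      if "s < x" "x < t" for x
      using base_pos[of x] that assms(2) by (auto intro!: derivative_eq_intros)
    show "\<bar>- ((1 - a * x) powr (1 / a - 1))\<bar> \<le> 1" if "s < x" "x < t" for x
      using profile_deriv_bound[OF assms(1,2) _ base_pos[of x]] that assms(3) by simp
  qed (use assms(4) in simp)
  then show ?thesis
    by simp
qed

lemma profile_lipschitz_le:
  assumes "a < 1" "0 \<le> s" "s \<le> t"
  shows "\<bar>profile a t - profile a s\<bar> \<le> t - s"
proof (cases "a = 0")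
  case True
  have "\<bar>exp (- t) - exp (- s)\<bar> \<le> 1 * (t - s)"
    using assms by (intro abs_diff_le_of_deriv_bound[where f' = "\<lambda>x. - exp (- x)"])
      (auto intro!: continuous_intros derivative_eq_intros)
  then show ?thesis
    using True by (simp add: profile_def)
next
  case False
  (* for a > 0 the profile vanishes beyond 1/a, so arguments can be clamped to [0, 1/a] *)
  define cut where "cut u = (if 0 < a then min u (1 / a) else u)" for u
  have profile_cut: "profile a u = (1 - a * cut u) powr (1 / a)" if "0 \<le> u" for u
    using False that mult_nonpos_nonneg[of a u]
    by (auto simp: profile_def cut_def field_simps max_def min_def)
  have "\<bar>(1 - a * cut t) powr (1 / a) - (1 - a * cut s) powr (1 / a)\<bar> \<le> cut t - cut s"
    using assms False by (intro power_profile_lipschitz_le) (auto simp: cut_def)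
  moreover have "cut t - cut s \<le> t - s"
    using assms by (auto simp: cut_def)
  ultimately show ?thesis
    using profile_cut assms by simp
qed

lemma profile_lipschitz:
  assumes "a < 1"
  shows "1-lipschitz_on {0..} (profile a)"
proof (rule lipschitz_onI)
  fix s t :: real
  assume "s \<in> {0..}" "t \<in> {0..}"
  then show "dist (profile a s) (profile a t) \<le> 1 * dist s t"
    using profile_lipschitz_le[OF assms, of s t] profile_lipschitz_le[OF assms, of t s]
    by (cases "s \<le> t") (auto simp: dist_real_def abs_minus_commute)
qed simp

lemma Da_D:
  assumes "\<omega> \<in> Da a"
  shows "\<omega> \<in> borel_measurable borel" "\<omega> 0 = 1" "0 \<le> \<omega> x" "\<omega> x \<le> 1" "1 - x\<^sup>2 \<le> \<omega> x"
    and "0 \<le> y \<Longrightarrow> y \<le> z \<Longrightarrow> \<omega> z \<le> \<omega> y"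
  using assms unfolding Da_def
  by (auto simp: monotone_on_def borel_measurable_continuous_onI)

lemma Da_diff_bounds:
  assumes "\<omega> \<in> Da a" "\<omega>' \<in> Da a"
  shows "\<bar>\<omega>' y - \<omega> y\<bar> \<le> 1" "\<bar>\<omega>' y - \<omega> y\<bar> \<le> y\<^sup>2"
  using Da_D(3-5)[OF assms(1), of y] Da_D(3-5)[OF assms(2), of y] by auto

lemma eta_pos: "0 < eta a"
  unfolding eta_def by (intro divide_pos_pos mult_pos_pos) auto

lemma Da_half_less_one:
  assumes "\<omega> \<in> Da a"
  shows "\<omega> (1/2) < 1"
proof (rule ccontr)
  assume "\<not> \<omega> (1/2) < 1"
  then have half: "\<omega> (1/2) = 1"
    using Da_D(4)[OF assms] by (simp add: not_less order_antisym)
  obtain d where d: "((\<lambda>t. (\<omega> t - \<omega> (1/2)) / (t - 1/2)) \<longlongrightarrow> d) (at_left (1/2))" "d \<le> - eta a"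
    using assms unfolding Da_def by blast
  have "eventually (\<lambda>t. t \<in> {0<..<1/2}) (at_left (1/2::real))"
    by (rule eventually_at_left_real) simp
  then have "eventually (\<lambda>t. (\<omega> t - \<omega> (1/2)) / (t - 1/2) = 0) (at_left (1/2::real))"
  proof eventually_elim
    case (elim t)
    then have "\<omega> t = 1"
      using half Da_D(4)[OF assms, of t] Da_D(6)[OF assms, of t "1/2"] by simp
    then show ?case
      using half by simp
  qed
  then have "((\<lambda>t. (\<omega> t - \<omega> (1/2)) / (t - 1/2)) \<longlongrightarrow> 0) (at_left (1/2))"
    by (rule tendsto_eventually)
  then have "d = 0"
    by (rule tendsto_unique[OF trivial_limit_at_left_real d(1)])
  then show False
    using d(2) eta_pos[of a] by simp
qed

lemma rho_pos: "0 < rho x"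
  by (simp add: rho_def add_pos_nonneg)

lemma rho_le_one: "rho x \<le> 1"
  by (simp add: rho_def)

lemma rho_le:
  assumes "0 < e" "1 / e\<^sup>2 \<le> \<bar>x\<bar>"
  shows "rho x \<le> e"
proof -
  have "(1 / e)\<^sup>2 \<le> 1 + \<bar>x\<bar>"
    using assms(2) by (simp add: power_divide)
  then have "1 / e \<le> sqrt (1 + \<bar>x\<bar>)"
    by (rule real_le_rsqrt)
  then show ?thesis
    using assms(1) by (simp add: rho_def divide_le_eq mult.commute)
qed

lemma abs_le_wnorm:
  assumes "bdd_above (range (\<lambda>x. \<bar>rho x * f x\<bar>))"
  shows "\<bar>rho y * f y\<bar> \<le> wnorm f"
  unfolding wnorm_def using assms by (rule cSUP_upper[OF UNIV_I])

lemma wnorm_le: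
  assumes "\<And>x. \<bar>rho x * f x\<bar> \<le> c"
  shows "wnorm f \<le> c"
  unfolding wnorm_def using assms by (intro cSUP_least) auto

lemma wnorm_le_of_bounded:
  assumes "0 < e" "\<And>x. \<bar>f x\<bar> \<le> 1" "\<And>x. \<bar>x\<bar> \<le> 1 / e\<^sup>2 \<Longrightarrow> \<bar>f x\<bar> \<le> e"
  shows "wnorm f \<le> e"
proof (rule wnorm_le)
  fix x
  have "rho x * \<bar>f x\<bar> \<le> e"
  proof (cases "\<bar>x\<bar> \<le> 1 / e\<^sup>2")
    case True
    then show ?thesis
      using mult_mono[OF rho_le_one assms(3)] by simp
  next
    case False
    then show ?thesis
      using mult_mono[OF rho_le[OF assms(1)] assms(2)] assms(1) by simp
  qed
  then show "\<bar>rho x * f x\<bar> \<le> e"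
    by (simp add: abs_mult abs_of_pos[OF rho_pos])
qed

lemma Da_diff_le_wnorm:
  assumes "\<omega> \<in> Da a" "\<omega>' \<in> Da a"
  shows "\<bar>\<omega>' y - \<omega> y\<bar> \<le> wnorm (\<lambda>x. \<omega>' x - \<omega> x) * sqrt (1 + \<bar>y\<bar>)"
proof -
  have "\<bar>rho x * (\<omega>' x - \<omega> x)\<bar> \<le> 1" for x
    using rho_pos[of x] rho_le_one[of x] Da_diff_bounds(1)[OF assms, of x]
    by (auto simp: abs_mult intro: mult_le_one)
  then have "\<bar>rho y * (\<omega>' y - \<omega> y)\<bar> \<le> wnorm (\<lambda>x. \<omega>' x - \<omega> x)"
    by (intro abs_le_wnorm bdd_aboveI2)
  then show ?thesis
    by (simp add: rho_def abs_mult divide_le_eq add_pos_nonneg)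
qed

section \<open>Bounds on T and r\<close>

lemma Top_eq_log_kernel: "Top \<omega> x = (1/pi) * (LINT y:{0<..}|lborel. log_kernel x y * \<omega> y)"
  by (simp add: Top_def log_kernel_def)

lemma set_integrable_Top:
  assumes "\<omega> \<in> Da a"
  shows "set_integrable lborel {0<..} (\<lambda>y. log_kernel x y * \<omega> y)"
  using Da_D(1,3,4)[OF assms] by (intro set_integrable_log_kernel_mult) auto

(* With c = |x|/sqrt 2 the kernel is >= 0 on (0,c] and <= 0 on [c,oo), while omega is nonincreasing;
   hence log_kernel x y * (omega y - omega c) >= 0, and the kernel has integral 0. *)
lemma Top_nonneg:
  assumes "\<omega> \<in> Da a"
  shows "0 \<le> Top \<omega> x"
proof -
  define c where "c = \<bar>x\<bar> / sqrt 2"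
  have "c \<ge> 0" "2 * c\<^sup>2 = x\<^sup>2"
    by (simp_all add: c_def power_divide)
  have "(LINT y:{0<..}|lborel. log_kernel x y * \<omega> c) \<le> (LINT y:{0<..}|lborel. log_kernel x y * \<omega> y)"
  proof (rule set_integral_mono)
    show "set_integrable lborel {0<..} (\<lambda>y. log_kernel x y * \<omega> c)"
      using set_integrable_log_kernel by (rule set_integrable_mult_left)
    fix y :: real
    assume "y \<in> {0<..}"
    show "log_kernel x y * \<omega> c \<le> log_kernel x y * \<omega> y"
    proof (cases "y \<le> c")
      case True
      then have "y\<^sup>2 \<le> c\<^sup>2"
        using \<open>y \<in> {0<..}\<close> by (intro power_mono) auto
      then have "2 * y\<^sup>2 \<le> x\<^sup>2"
        using \<open>2 * c\<^sup>2 = x\<^sup>2\<close> by simp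
      then show ?thesis
        using True \<open>y \<in> {0<..}\<close> Da_D(6)[OF assms, of y c]
        by (intro mult_left_mono log_kernel_nonneg) auto
    next
      case False
      then have "c\<^sup>2 \<le> y\<^sup>2"
        using \<open>c \<ge> 0\<close> by (intro power_mono) auto
      then have "x\<^sup>2 \<le> 2 * y\<^sup>2"
        using \<open>2 * c\<^sup>2 = x\<^sup>2\<close> by simp
      then show ?thesis
        using False \<open>c \<ge> 0\<close> \<open>y \<in> {0<..}\<close> Da_D(6)[OF assms, of c y]
        by (intro mult_left_mono_neg log_kernel_nonpos) auto
    qed
  qed (rule set_integrable_Top[OF assms])
  then show ?thesis
    using set_integral_log_kernel[of x] by (simp add: Top_eq_log_kernel)
qed

lemma Top_le:
  assumes "\<omega> \<in> Da a"
  shows "Top \<omega> x \<le> \<bar>x\<bar> * log_kernel_mass / pi"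
proof -
  have "(LINT y:{0<..}|lborel. log_kernel x y * \<omega> y) \<le> (LINT y:{0<..}|lborel. \<bar>log_kernel x y\<bar>)"
  proof (rule set_integral_mono)
    show "set_integrable lborel {0<..} (\<lambda>y. log_kernel x y * \<omega> y)"
      by (rule set_integrable_Top[OF assms])
    show "set_integrable lborel {0<..} (\<lambda>y. \<bar>log_kernel x y\<bar>)"
      using set_integrable_log_kernel by (rule set_integrable_abs)
    fix y
    have "log_kernel x y * \<omega> y \<le> \<bar>log_kernel x y\<bar> * \<omega> y"
      using Da_D(3)[OF assms, of y] by (intro mult_right_mono) auto
    also have "\<dots> \<le> \<bar>log_kernel x y\<bar>"
      using Da_D(3,4)[OF assms, of y] by (intro mult_left_le) auto
    finally show "log_kernel x y * \<omega> y \<le> \<bar>log_kernel x y\<bar>" .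
  qed
  then show ?thesis
    by (simp add: Top_eq_log_kernel set_integral_abs_log_kernel divide_right_mono)
qed

lemma abs_Top_diff_le:
  assumes "\<omega> \<in> Da a" "\<omega>' \<in> Da a"
  shows "\<bar>Top \<omega>' x - Top \<omega> x\<bar> \<le> (1/pi) * (LINT y:{0<..}|lborel. \<bar>log_kernel x y\<bar> * \<bar>\<omega>' y - \<omega> y\<bar>)"
proof -
  note [measurable] = Da_D(1)[OF assms(1)] Da_D(1)[OF assms(2)]
  have int: "set_integrable lborel {0<..} (\<lambda>y. log_kernel x y * (\<omega>' y - \<omega> y))"
    using Da_diff_bounds(1)[OF assms] by (intro set_integrable_log_kernel_mult) auto
  have "Top \<omega>' x - Top \<omega> x = (1/pi) * (LINT y:{0<..}|lborel. log_kernel x y * (\<omega>' y - \<omega> y))"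
    using set_integrable_Top[OF assms(1)] set_integrable_Top[OF assms(2)]
    by (simp add: Top_eq_log_kernel set_integral_diff right_diff_distrib)
  moreover have "\<bar>LINT y:{0<..}|lborel. log_kernel x y * (\<omega>' y - \<omega> y)\<bar>
      \<le> (LINT y:{0<..}|lborel. \<bar>log_kernel x y\<bar> * \<bar>\<omega>' y - \<omega> y\<bar>)"
    using set_integral_norm_bound[OF int] by (simp add: abs_mult)
  ultimately show ?thesis
    by (simp add: abs_mult divide_right_mono)
qed

lemma rfun_eq_integral:
  assumes "\<omega> \<in> Da a"
  shows "rfun \<omega> = (1/pi) * (LINT y:{0<..}|lborel. (1 - \<omega> y) / y\<^sup>2)"
  using Da_D(2)[OF assms] by (simp add: rfun_def)

lemma set_integrable_rfun:
  assumes "\<omega> \<in> Da a"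
  shows "set_integrable lborel {0<..} (\<lambda>y. (1 - \<omega> y) / y\<^sup>2)"
proof (rule set_integrable_div_square)
  show "\<bar>1 - \<omega> y\<bar> \<le> 1" "\<bar>1 - \<omega> y\<bar> \<le> y\<^sup>2" for y
    using Da_D(3-5)[OF assms, of y] by auto
qed (intro borel_measurable_diff borel_measurable_const Da_D(1)[OF assms])

lemma rfun_pos:
  assumes "\<omega> \<in> Da a"
  shows "0 < rfun \<omega>"
proof -
  define q where "q = 1 - \<omega> (1/2)"
  have "0 < q"
    using Da_half_less_one[OF assms] by (simp add: q_def)
  have bump: "set_integrable lborel {0<..} (\<lambda>y::real. q / 4 * indicator {1..2} y)"
    by (rule set_integrable_subset[of _ UNIV]) (auto simp: set_integrable_def)
  have "(LINT y:{0<..}|lborel. q / 4 * indicator {1..2::real} y)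
      \<le> (LINT y:{0<..}|lborel. (1 - \<omega> y) / y\<^sup>2)"
  proof (rule set_integral_mono[OF bump set_integrable_rfun[OF assms]])
    fix y :: real
    assume "y \<in> {0<..}"
    show "q / 4 * indicator {1..2} y \<le> (1 - \<omega> y) / y\<^sup>2"
    proof (cases "y \<in> {1..2}")
      case True
      then have "q \<le> 1 - \<omega> y"
        using Da_D(6)[OF assms, of "1/2" y] by (simp add: q_def)
      moreover have "y\<^sup>2 \<le> 4"
        using True power_mono[of y 2 2] by simp
      ultimately have "q / 4 * y\<^sup>2 \<le> 1 - \<omega> y"
        using \<open>0 < q\<close> mult_left_mono[of "y\<^sup>2" 4 "q / 4"] by linarith
      then show ?thesis
        using True by (simp add: le_divide_eq)
    qed (use Da_D(4)[OF assms, of y] in simp)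
  qed
  moreover have "(LINT y:{0<..}|lborel. q / 4 * indicator {1..2::real} y)
      = (LBINT y. q / 4 * indicator {1..2::real} y)"
    unfolding set_lebesgue_integral_def
    by (intro Bochner_Integration.integral_cong) (auto simp: indicator_def)
  ultimately show ?thesis
    using \<open>0 < q\<close> by (simp add: rfun_eq_integral[OF assms])
qed

lemma abs_rfun_diff_le:
  assumes "\<omega> \<in> Da a" "\<omega>' \<in> Da a"
  shows "\<bar>rfun \<omega>' - rfun \<omega>\<bar> \<le> (1/pi) * (LINT y:{0<..}|lborel. \<bar>\<omega>' y - \<omega> y\<bar> / y\<^sup>2)"
proof -
  note [measurable] = Da_D(1)[OF assms(1)] Da_D(1)[OF assms(2)]
  have int: "set_integrable lborel {0<..} (\<lambda>y. (\<omega> y - \<omega>' y) / y\<^sup>2)"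
    using Da_diff_bounds[OF assms] by (intro set_integrable_div_square) (auto simp: abs_minus_commute)
  have "rfun \<omega>' - rfun \<omega>
      = (1/pi) * ((LINT y:{0<..}|lborel. (1 - \<omega>' y) / y\<^sup>2) - (LINT y:{0<..}|lborel. (1 - \<omega> y) / y\<^sup>2))"
    by (simp add: rfun_eq_integral[OF assms(1)] rfun_eq_integral[OF assms(2)] right_diff_distrib)
  also have "\<dots> = (1/pi) * (LINT y:{0<..}|lborel. (1 - \<omega>' y) / y\<^sup>2 - (1 - \<omega> y) / y\<^sup>2)"
    using set_integral_diff(2)[OF set_integrable_rfun[OF assms(2)] set_integrable_rfun[OF assms(1)]]
    by simp
  also have "\<dots> = (1/pi) * (LINT y:{0<..}|lborel. (\<omega> y - \<omega>' y) / y\<^sup>2)"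
    by (simp add: diff_divide_distrib[symmetric])
  finally show ?thesis
    using set_integral_norm_bound[OF int]
    by (simp add: abs_minus_commute divide_right_mono)
qed

lemma Ra_nonneg: "0 \<le> Ra a \<omega> x"
  by (simp add: Ra_eq_profile profile_nonneg)

lemma Ra_le_one:
  assumes "\<omega> \<in> Da a"
  shows "Ra a \<omega> x \<le> 1"
  unfolding Ra_eq_profile using Top_nonneg[OF assms] rfun_pos[OF assms]
  by (intro profile_le_one) simp

lemma abs_Ra_diff_le_one:
  assumes "\<omega> \<in> Da a" "\<omega>' \<in> Da a"
  shows "\<bar>Ra a \<omega>' x - Ra a \<omega> x\<bar> \<le> 1"
  using Ra_nonneg[of a \<omega> x] Ra_nonneg[of a \<omega>' x] Ra_le_one[OF assms(1), of x] Ra_le_one[OF assms(2), of x]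
  by linarith

section \<open>Continuity\<close>

(* Bounds the integral of |log_kernel x y| * |omega' y - omega y| for |x| <= M after the substitution
   y = |x| t, using |omega' y - omega y| <= min 1 (delta * sqrt (1 + |y|)). *)
definition Top_modulus :: "real \<Rightarrow> real \<Rightarrow> real" where
  "Top_modulus M \<delta> =
    (LINT t:{0<..}|lborel. min \<bar>log_kernel 1 t\<bar> (\<delta> * (\<bar>log_kernel 1 t\<bar> * sqrt (1 + M * t))))"

lemma Top_modulus_tendsto_0:
  assumes "0 \<le> M"
  shows "(Top_modulus M \<longlongrightarrow> 0) (at_right 0)"
  unfolding Top_modulus_def[abs_def] using set_integrable_abs[OF set_integrable_log_kernel_one] assms
  by (intro tendsto_set_integral_min_at_right_0) auto

lemma Top_modulus_nonneg:
  assumes "0 \<le> M" "0 \<le> \<delta>"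
  shows "0 \<le> Top_modulus M \<delta>"
  unfolding Top_modulus_def set_lebesgue_integral_def using assms
  by (intro integral_nonneg_AE AE_I2) (auto simp: indicator_def)

lemma set_integral_abs_log_kernel_mult_le_modulus:
  fixes g :: "real \<Rightarrow> real"
  assumes "g \<in> borel_measurable borel" "\<And>y. \<bar>g y\<bar> \<le> 1" "\<And>y. \<bar>g y\<bar> \<le> \<delta> * sqrt (1 + \<bar>y\<bar>)"
    and "0 \<le> \<delta>" "\<bar>x\<bar> \<le> M"
  shows "(LINT y:{0<..}|lborel. \<bar>log_kernel x y\<bar> * \<bar>g y\<bar>) \<le> \<bar>x\<bar> * Top_modulus M \<delta>"
proof (cases "x = 0")
  case False
  then have "0 < \<bar>x\<bar>"
    by simp
  let ?d = "\<lambda>y. \<bar>log_kernel x y\<bar> * \<bar>g y\<bar>"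
  have "(LINT y:{0<..}|lborel. ?d y) = \<bar>x\<bar> * (LINT t:{0<..}|lborel. ?d (\<bar>x\<bar> * t))"
    by (rule set_integral_Ioi_rescale[OF \<open>0 < \<bar>x\<bar>\<close>])
  also have "\<dots> \<le> \<bar>x\<bar> * Top_modulus M \<delta>"
    unfolding Top_modulus_def
  proof (intro mult_left_mono set_integral_mono)
    show "set_integrable lborel {0<..} (\<lambda>t. ?d (\<bar>x\<bar> * t))"
      using set_integrable_abs[OF set_integrable_log_kernel_mult[OF assms(1,2)]]
        set_integrable_Ioi_rescale_iff[OF \<open>0 < \<bar>x\<bar>\<close>, of ?d] by (simp add: abs_mult)
    show "set_integrable lborel {0<..}
        (\<lambda>t. min \<bar>log_kernel 1 t\<bar> (\<delta> * (\<bar>log_kernel 1 t\<bar> * sqrt (1 + M * t))))"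
      using set_integrable_abs[OF set_integrable_log_kernel_one] assms(4,5)
      by (intro set_integrable_min_scaled) auto
    fix t :: real
    assume "t \<in> {0<..}"
    have "\<bar>g (\<bar>x\<bar> * t)\<bar> \<le> \<delta> * sqrt (1 + \<bar>x\<bar> * t)"
      using assms(3)[of "\<bar>x\<bar> * t"] \<open>t \<in> {0<..}\<close> by (simp add: abs_mult)
    also have "\<dots> \<le> \<delta> * sqrt (1 + M * t)"
      using \<open>t \<in> {0<..}\<close> assms(4,5) by (intro mult_left_mono) (auto intro!: mult_right_mono)
    finally show "?d (\<bar>x\<bar> * t) \<le> min \<bar>log_kernel 1 t\<bar> (\<delta> * (\<bar>log_kernel 1 t\<bar> * sqrt (1 + M * t)))"
      using assms(2)[of "\<bar>x\<bar> * t"] log_kernel_scale[OF False, of t] \<open>t \<in> {0<..}\<close>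
      by (auto intro: mult_left_le mult_left_mono simp: mult.left_commute[of \<delta>])
  qed simp
  finally show ?thesis .
qed simp

lemma abs_Top_diff_le_modulus:
  assumes "\<omega> \<in> Da a" "\<omega>' \<in> Da a" "0 \<le> \<delta>" "\<And>y. \<bar>\<omega>' y - \<omega> y\<bar> \<le> \<delta> * sqrt (1 + \<bar>y\<bar>)"
    and "\<bar>x\<bar> \<le> M"
  shows "\<bar>Top \<omega>' x - Top \<omega> x\<bar> \<le> M / pi * Top_modulus M \<delta>"
proof -
  note [measurable] = Da_D(1)[OF assms(1)] Da_D(1)[OF assms(2)]
  have "0 \<le> M"
    using assms(5) by linarith
  have "(LINT y:{0<..}|lborel. \<bar>log_kernel x y\<bar> * \<bar>\<omega>' y - \<omega> y\<bar>) \<le> \<bar>x\<bar> * Top_modulus M \<delta>"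
    using Da_diff_bounds(1)[OF assms(1,2)] assms(3-5)
    by (intro set_integral_abs_log_kernel_mult_le_modulus) auto
  also have "\<dots> \<le> M * Top_modulus M \<delta>"
    using assms(5) Top_modulus_nonneg[OF \<open>0 \<le> M\<close> assms(3)] by (intro mult_right_mono) auto
  finally have "(1/pi) * (LINT y:{0<..}|lborel. \<bar>log_kernel x y\<bar> * \<bar>\<omega>' y - \<omega> y\<bar>)
      \<le> M / pi * Top_modulus M \<delta>"
    by (simp add: divide_right_mono)
  then show ?thesis
    by (rule order_trans[OF abs_Top_diff_le[OF assms(1,2)]])
qed

definition rfun_modulus :: "real \<Rightarrow> real" where
  "rfun_modulus \<delta> = (LINT y:{0<..}|lborel. min (2 / (1 + y\<^sup>2)) (\<delta> * (sqrt (1 + y) / y\<^sup>2)))"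

lemma rfun_modulus_tendsto_0: "(rfun_modulus \<longlongrightarrow> 0) (at_right 0)"
  unfolding rfun_modulus_def[abs_def] using set_integrable_two_div_1_plus_square
  by (intro tendsto_set_integral_min_at_right_0) (auto intro!: add_pos_nonneg)

lemma abs_rfun_diff_le_modulus:
  assumes "\<omega> \<in> Da a" "\<omega>' \<in> Da a" "0 \<le> \<delta>" "\<And>y. \<bar>\<omega>' y - \<omega> y\<bar> \<le> \<delta> * sqrt (1 + \<bar>y\<bar>)"
  shows "\<bar>rfun \<omega>' - rfun \<omega>\<bar> \<le> rfun_modulus \<delta> / pi"
proof -
  note [measurable] = Da_D(1)[OF assms(1)] Da_D(1)[OF assms(2)]
  have "(LINT y:{0<..}|lborel. \<bar>\<omega>' y - \<omega> y\<bar> / y\<^sup>2) \<le> rfun_modulus \<delta>"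
    unfolding rfun_modulus_def
  proof (rule set_integral_mono)
    show "set_integrable lborel {0<..} (\<lambda>y. \<bar>\<omega>' y - \<omega> y\<bar> / y\<^sup>2)"
      using Da_diff_bounds[OF assms(1,2)] by (intro set_integrable_div_square) auto
    show "set_integrable lborel {0<..} (\<lambda>y. min (2 / (1 + y\<^sup>2)) (\<delta> * (sqrt (1 + y) / y\<^sup>2)))"
      using set_integrable_two_div_1_plus_square assms(3)
      by (intro set_integrable_min_scaled) (auto intro!: add_pos_nonneg)
    fix y :: real
    assume "y \<in> {0<..}"
    then show "\<bar>\<omega>' y - \<omega> y\<bar> / y\<^sup>2 \<le> min (2 / (1 + y\<^sup>2)) (\<delta> * (sqrt (1 + y) / y\<^sup>2))"
      using Da_diff_bounds[OF assms(1,2), of y] assms(4)[of y]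
      by (auto intro!: div_square_le_two_div_1_plus_square divide_right_mono)
  qed
  then show ?thesis
    by (intro order_trans[OF abs_rfun_diff_le[OF assms(1,2)]]) (simp add: divide_right_mono)
qed

lemma abs_Ra_diff_le_of_moduli:
  assumes "a < 1" "\<omega> \<in> Da a" "\<omega>' \<in> Da a" "0 \<le> \<delta>"
    and close: "\<And>y. \<bar>\<omega>' y - \<omega> y\<bar> \<le> \<delta> * sqrt (1 + \<bar>y\<bar>)"
    and "\<bar>x\<bar> \<le> M"
    and T: "M / pi * Top_modulus M \<delta> \<le> e * rfun \<omega> / 4"
    and r: "rfun_modulus \<delta> / pi \<le> min (rfun \<omega> / 2) (e * (rfun \<omega>)\<^sup>2 / (4 * (M * log_kernel_mass / pi + 1)))"
  shows "\<bar>Ra a \<omega>' x - Ra a \<omega> x\<bar> \<le> e"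
proof -
  have "\<bar>x\<bar> * log_kernel_mass / pi \<le> M * log_kernel_mass / pi"
    using \<open>\<bar>x\<bar> \<le> M\<close> log_kernel_mass_nonneg by (intro divide_right_mono mult_right_mono) auto
  then have "Top \<omega> x \<le> M * log_kernel_mass / pi"
    using Top_le[OF assms(2), of x] by linarith
  have "\<bar>Ra a \<omega>' x - Ra a \<omega> x\<bar> \<le> \<bar>Top \<omega>' x / rfun \<omega>' - Top \<omega> x / rfun \<omega>\<bar>"
    unfolding Ra_eq_profile
    using lipschitz_onD[OF profile_lipschitz[OF assms(1)]] Top_nonneg[OF assms(2)] Top_nonneg[OF assms(3)]
      rfun_pos[OF assms(2)] rfun_pos[OF assms(3)] by (simp add: dist_real_def)
  also have "\<dots> \<le> e"
  proof (rule abs_divide_diff_le[OF rfun_pos[OF assms(2)] Top_nonneg[OF assms(2)] \<open>Top \<omega> x \<le> _\<close>])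
    show "\<bar>Top \<omega>' x - Top \<omega> x\<bar> \<le> e * rfun \<omega> / 4"
      using abs_Top_diff_le_modulus[OF assms(2,3,4) close \<open>\<bar>x\<bar> \<le> M\<close>] T by linarith
    show "\<bar>rfun \<omega>' - rfun \<omega>\<bar> \<le> min (rfun \<omega> / 2) (e * (rfun \<omega>)\<^sup>2 / (4 * (M * log_kernel_mass / pi + 1)))"
      using abs_rfun_diff_le_modulus[OF assms(2,3,4) close] r by linarith
  qed
  finally show ?thesis .
qed

lemma Ra_uniformly_close_on_bounded:
  assumes "a < 1" "\<omega> \<in> Da a" "0 \<le> M" "0 < e"
  shows "\<exists>\<delta>>0. \<forall>\<omega>'\<in>Da a. wnorm (\<lambda>x. \<omega>' x - \<omega> x) \<le> \<delta> \<longrightarrow>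
           (\<forall>x. \<bar>x\<bar> \<le> M \<longrightarrow> \<bar>Ra a \<omega>' x - Ra a \<omega> x\<bar> \<le> e)"
proof -
  define r where "r = rfun \<omega>"
  define \<rho> where "\<rho> = min (r / 2) (e * r\<^sup>2 / (4 * (M * log_kernel_mass / pi + 1)))"
  have "0 < r"
    using rfun_pos[OF assms(2)] by (simp add: r_def)
  moreover have "0 < e * r\<^sup>2 / (4 * (M * log_kernel_mass / pi + 1))"
    using \<open>0 < r\<close> assms(3,4) log_kernel_mass_nonneg
    by (intro divide_pos_pos mult_pos_pos add_nonneg_pos) auto
  ultimately have "0 < \<rho>"
    by (simp add: \<rho>_def)
  have "\<forall>\<^sub>F \<delta> in at_right 0. 0 < \<delta> \<and> M / pi * Top_modulus M \<delta> < e * r / 4 \<and> rfun_modulus \<delta> / pi < \<rho>"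
  proof (intro eventually_conj eventually_at_right_less)
    show "\<forall>\<^sub>F \<delta> in at_right 0. M / pi * Top_modulus M \<delta> < e * r / 4"
      using tendsto_mult[OF tendsto_const Top_modulus_tendsto_0[OF assms(3)], of "M / pi"]
        \<open>0 < r\<close> assms(4) by (intro order_tendstoD(2)) auto
    show "\<forall>\<^sub>F \<delta> in at_right 0. rfun_modulus \<delta> / pi < \<rho>"
      using tendsto_divide[OF rfun_modulus_tendsto_0 tendsto_const, of pi] \<open>0 < \<rho>\<close>
      by (intro order_tendstoD(2)) auto
  qed
  then obtain \<delta> where \<delta>: "0 < \<delta>" "M / pi * Top_modulus M \<delta> < e * r / 4" "rfun_modulus \<delta> / pi < \<rho>"
    using eventually_happens'[OF trivial_limit_at_right_real] by blast
  have "\<bar>Ra a \<omega>' x - Ra a \<omega> x\<bar> \<le> e"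
    if "\<omega>' \<in> Da a" "wnorm (\<lambda>x. \<omega>' x - \<omega> x) \<le> \<delta>" "\<bar>x\<bar> \<le> M" for \<omega>' x
  proof (rule abs_Ra_diff_le_of_moduli[OF assms(1,2) that(1) less_imp_le[OF \<delta>(1)] _ that(3)])
    show "\<bar>\<omega>' y - \<omega> y\<bar> \<le> \<delta> * sqrt (1 + \<bar>y\<bar>)" for y
      using Da_diff_le_wnorm[OF assms(2) that(1), of y] mult_right_mono[OF that(2), of "sqrt (1 + \<bar>y\<bar>)"]
      by simp
  qed (use \<delta> in \<open>simp_all add: r_def \<rho>_def\<close>)
  with \<delta>(1) show ?thesis
    by blast
qed

theorem mainTheorem12:
  fixes a :: real
  assumes "a < 1"
  shows "\<forall>\<omega>\<in>Da a. \<forall>\<epsilon>>0. \<exists>\<delta>>0. \<forall>\<omega>'\<in>Da a.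
           wnorm (\<lambda>x. \<omega>' x - \<omega> x) < \<delta> \<longrightarrow> wnorm (\<lambda>x. Ra a \<omega>' x - Ra a \<omega> x) < \<epsilon>"
proof (intro ballI allI impI)
  fix \<omega> and \<epsilon> :: real
  assume \<omega>: "\<omega> \<in> Da a" and "0 < \<epsilon>"
  obtain \<delta> where "0 < \<delta>" and near: "\<And>\<omega>' x. \<omega>' \<in> Da a \<Longrightarrow> wnorm (\<lambda>x. \<omega>' x - \<omega> x) \<le> \<delta> \<Longrightarrow>
      \<bar>x\<bar> \<le> 1 / (\<epsilon> / 2)\<^sup>2 \<Longrightarrow> \<bar>Ra a \<omega>' x - Ra a \<omega> x\<bar> \<le> \<epsilon> / 2"
    using Ra_uniformly_close_on_bounded[OF assms \<omega>, of "1 / (\<epsilon> / 2)\<^sup>2" "\<epsilon> / 2"] \<open>0 < \<epsilon>\<close> by auto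
  have "wnorm (\<lambda>x. Ra a \<omega>' x - Ra a \<omega> x) < \<epsilon>"
    if "\<omega>' \<in> Da a" "wnorm (\<lambda>x. \<omega>' x - \<omega> x) < \<delta>" for \<omega>'
  proof -
    have "wnorm (\<lambda>x. Ra a \<omega>' x - Ra a \<omega> x) \<le> \<epsilon> / 2"
      using \<open>0 < \<epsilon>\<close> abs_Ra_diff_le_one[OF \<omega> that(1)] near[OF that(1)] that(2)
      by (intro wnorm_le_of_bounded) auto
    then show ?thesis
      using \<open>0 < \<epsilon>\<close> by linarith
  qed
  with \<open>0 < \<delta>\<close> show "\<exists>\<delta>>0. \<forall>\<omega>'\<in>Da a. wnorm (\<lambda>x. \<omega>' x - \<omega> x) < \<delta> \<longrightarrow>
      wnorm (\<lambda>x. Ra a \<omega>' x - Ra a \<omega> x) < \<epsilon>"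
    by blast
qed

end
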